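(* In the discrete torus model with frame group $\mathbb{Z}_2\times\mathbb{Z}_2$ and the 2-dimensional calculus $\mathcal C=\{\overline{10},\overline{01}\}$ (context), the torsion-free and cotorsion-free spin connections are exactly \[A_{\overline{10}}=a\,e_1-\tfrac{s_2}{2}e_2,\qquad A_{\overline{01}}=-\tfrac{s_1}{2}e_1+b\,e_2\] for arbitrary functions $a,b$, where $s_1=\bar\partial^2\Theta_1$, $s_2=\bar\partial^1\Theta_2$. The covariant derivative is $\nabla e_1=2a\,e_1\otimes e_1-s_2\,e_2\otimes e_1$, $\nabla e_2=-s_1\,e_1\otimes e_2+2b\,e_2\otimes e_2$, and such a connection is regular if and only if $a\,\bar\partial^1b-b\,\bar\partial^2a=0$ (equivalently $aR_1b-bR_2a=0$).
   Context: Discrete torus model: $\Sigma=\mathbb{Z}_2\times\mathbb{Z}_2$, $x\to y$ iff $y-x\in\{(1,0),(0,1)\}$; diagonal zweibein $e_{1,x,x+(1,0)}=\Theta_1(x)^{-1}$, $e_{2,x,x+(0,1)}=\Theta_2(x)^{-1}$, $\Theta_a$ nowhere-vanishing with $\Theta_1R_1\Theta_2=\Theta_2R_2\Theta_1$; $R_1f(x)=f(x+(1,0))$, $R_2f(x)=f(x+(0,1))$, $\bar\partial^a=R_a-\mathrm{id}$; $e_af=R_a(f)e_a$, $\mathrm{d}f=\sum_a(\bar\partial^af)\Theta_ae_a$; two-forms $e_1\wedge e_2=-e_2\wedge e_1$, $e_a\wedge e_a=0$; $\mathrm{d}e_1=(\bar\partial^1\Theta_2)e_1\wedge e_2$, $\mathrm{d}e_2=-(\bar\partial^2\Theta_1)e_1\wedge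 e_2$. Frame group $\mathbb{Z}_2\times\mathbb{Z}_2=\{\overline{00},\overline{10},\overline{01},\overline{11}\}$ with calculus $\mathcal C=\{\overline{10},\overline{01}\}$, $f^{\overline{10}}\triangleright e_1=-2e_1$, $f^{\overline{10}}\triangleright e_2=0$, $f^{\overline{01}}\triangleright e_1=0$, $f^{\overline{01}}\triangleright e_2=-2e_2$. Spin connection: 1-forms $A_{\overline{10}},A_{\overline{01}}$. Torsion-free: $\mathrm{d}e_a+\sum_iA_i\wedge(f^i\triangleright e_a)=0$; cotorsion-free: $\mathrm{d}e_a+\sum_i(f^i\triangleright e_a)\wedge A_i=0$; regular: $A_{\overline{10}}\wedge A_{\overline{01}}+A_{\overline{01}}\wedge A_{\overline{10}}=0$. Covariant derivative $\nabla(\sum\alpha^ae_a)=\sum\mathrm{d}\alpha^a\otimes e_a-\sum_{i,a}\alpha^aA_i\otimes f^i\triangleright e_a$. *)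

theory Defs
  imports Complex_Main "HOL-Library.Numeral_Type" "HOL-Library.Function_Algebras"
begin

type_synonym point = "2 \<times> 2"
type_synonym fn = "point \<Rightarrow> real"

text \<open>Frame index a in {1,2} (for e_1, e_2) and elements of the calculus C = {10, 01}.\<close>
datatype idx = I1 | I2
datatype gen = G10 | G01

definition shift :: "idx \<Rightarrow> point" where
  "shift a = (case a of I1 \<Rightarrow> (1, 0) | I2 \<Rightarrow> (0, 1))"

definition R :: "idx \<Rightarrow> fn \<Rightarrow> fn" where
  "R a f = (\<lambda>p. f (fst p + fst (shift a), snd p + snd (shift a)))"

definition dbar :: "idx \<Rightarrow> fn \<Rightarrow> fn" where
  "dbar a f = R a f - f"

text \<open>Diagonal zweibein data Theta_a: nowhere vanishing, with the compatibility condition.\<close>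
definition zweibein :: "(idx \<Rightarrow> fn) \<Rightarrow> bool" where
  "zweibein \<Theta> \<longleftrightarrow> (\<forall>a x. \<Theta> a x \<noteq> 0) \<and>
     \<Theta> I1 * R I1 (\<Theta> I2) = \<Theta> I2 * R I2 (\<Theta> I1)"

text \<open>One-forms: sum_a alpha^a e_a with coefficient functions on the left.\<close>
type_synonym oneform = "idx \<Rightarrow> fn"
text \<open>Two-forms: f e_1 /\ e_2.\<close>
type_synonym twoform = fn
text \<open>Elements of Omega^1 (x) Omega^1: sum T_{ab} e_a (x) e_b.\<close>
type_synonym tensor = "idx \<Rightarrow> idx \<Rightarrow> fn"

definition e :: "idx \<Rightarrow> oneform" where
  "e a = (\<lambda>b. if b = a then 1 else 0)"

definition lmult1 :: "fn \<Rightarrow> oneform \<Rightarrow> oneform" where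
  "lmult1 f \<omega> = (\<lambda>c. f * \<omega> c)"

definition lmult :: "fn \<Rightarrow> tensor \<Rightarrow> tensor" where
  "lmult f T = (\<lambda>c b. f * T c b)"

text \<open>e_a /\ e_b = eps a b e_1 /\ e_2.\<close>
definition eps :: "idx \<Rightarrow> idx \<Rightarrow> real" where
  "eps a b = (if a = I1 \<and> b = I2 then 1 else if a = I2 \<and> b = I1 then -1 else 0)"

text \<open>Wedge product using e_a f = R_a(f) e_a.\<close>
definition wedge :: "oneform \<Rightarrow> oneform \<Rightarrow> twoform" where
  "wedge \<omega> \<eta> = (\<lambda>x. \<Sum>a\<in>{I1, I2}. \<Sum>b\<in>{I1, I2}. \<omega> a x * R a (\<eta> b) x * eps a b)"

text \<open>Tensor product over the function algebra, using e_c f = R_c(f) e_c.\<close>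
definition tens :: "oneform \<Rightarrow> oneform \<Rightarrow> tensor" where
  "tens \<omega> \<eta> = (\<lambda>c b. \<omega> c * R c (\<eta> b))"

definition dfun :: "(idx \<Rightarrow> fn) \<Rightarrow> fn \<Rightarrow> oneform" where
  "dfun \<Theta> f = (\<lambda>a. dbar a f * \<Theta> a)"

definition de :: "(idx \<Rightarrow> fn) \<Rightarrow> idx \<Rightarrow> twoform" where
  "de \<Theta> a = (case a of I1 \<Rightarrow> dbar I1 (\<Theta> I2) | I2 \<Rightarrow> - dbar I2 (\<Theta> I1))"

definition gdir :: "gen \<Rightarrow> idx" where
  "gdir i = (case i of G10 \<Rightarrow> I1 | G01 \<Rightarrow> I2)"

definition act :: "gen \<Rightarrow> idx \<Rightarrow> oneform" where
  "act i a = (if gdir i = a then lmult1 (-2) (e a) else 0)"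

type_synonym spin_connection = "gen \<Rightarrow> oneform"

definition torsion_free :: "(idx \<Rightarrow> fn) \<Rightarrow> spin_connection \<Rightarrow> bool" where
  "torsion_free \<Theta> A \<longleftrightarrow>
     (\<forall>a. de \<Theta> a + (\<Sum>i\<in>{G10, G01}. wedge (A i) (act i a)) = 0)"

definition cotorsion_free :: "(idx \<Rightarrow> fn) \<Rightarrow> spin_connection \<Rightarrow> bool" where
  "cotorsion_free \<Theta> A \<longleftrightarrow>
     (\<forall>a. de \<Theta> a + (\<Sum>i\<in>{G10, G01}. wedge (act i a) (A i)) = 0)"

definition regular :: "spin_connection \<Rightarrow> bool" where
  "regular A \<longleftrightarrow> wedge (A G10) (A G01) + wedge (A G01) (A G10) = 0"

definition nabla :: "(idx \<Rightarrow> fn) \<Rightarrow> spin_connection \<Rightarrow> oneform \<Rightarrow> tensor" where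
  "nabla \<Theta> A \<omega> =
     (\<Sum>a\<in>{I1, I2}. tens (dfun \<Theta> (\<omega> a)) (e a))
     - (\<Sum>i\<in>{G10, G01}. \<Sum>a\<in>{I1, I2}. lmult (\<omega> a) (tens (A i) (act i a)))"

end

theory Submission
  imports Defs
begin

text \<open>Since every shift has order two in \<open>Z\<^sub>2 \<times> Z\<^sub>2\<close>, each \<open>R\<^sub>a\<close> is an
  involutive algebra automorphism and \<open>R\<^sub>a(\<partial>\<^sup>af) = -\<partial>\<^sup>af\<close>. Torsion-freeness fixes the
  off-diagonal coefficients \<open>A\<^bsub>10\<^esub>\<^sup>2\<close>, \<open>A\<^bsub>01\<^esub>\<^sup>1\<close> as \<open>-s\<^sub>2/2\<close>, \<open>-s\<^sub>1/2\<close>; cotorsion-freeness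
  gives the same equations with \<open>R\<^sub>a\<close> applied, so by this anti-invariance the two
  conditions coincide, and the diagonal coefficients \<open>a\<close>, \<open>b\<close> stay free. In the
  symmetrised wedge of the regularity condition the products of the off-diagonal
  coefficients cancel for the same reason.\<close>

lemma R_involutive [simp]: "R a (R a f) = f"
proof -
  have two_eq_zero: "(2::2) = 0"
    by simp
  show ?thesis
    by (cases a) (auto simp: R_def shift_def fun_eq_iff add.assoc[symmetric] two_eq_zero)
qed

lemma all_idx_iff: "(\<forall>c. P c) \<longleftrightarrow> P I1 \<and> P I2"
  by (metis (full_types) idx.exhaust)

lemma R_add: "R a (f + g) = R a f + R a g"
  and R_diff: "R a (f - g) = R a f - R a g"
  and R_mult: "R a (f * g) = R a f * R a g"
  and R_uminus: "R a (- f) = - R a f"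
  and R_numeral: "R a (numeral n) = numeral n"
  and R_zero: "R a 0 = 0"
  by (auto simp: R_def fun_eq_iff)

lemma R_eq_zero_iff: "R a f = 0 \<longleftrightarrow> f = 0"
  by (metis R_involutive R_zero)

lemma R_dbar: "R a (dbar a f) = - dbar a f"
  by (simp add: dbar_def R_diff)

lemma R_de: "R a (de \<Theta> a) = - de \<Theta> a"
  by (cases a) (simp_all add: de_def R_dbar R_uminus)

lemma wedge_expand: "wedge \<omega> \<eta> = \<omega> I1 * R I1 (\<eta> I2) - \<omega> I2 * R I2 (\<eta> I1)"
  by (simp add: wedge_def eps_def fun_eq_iff)

lemma oneform_eq_iff: "\<omega> = lmult1 f (e I1) + lmult1 g (e I2) \<longleftrightarrow> \<omega> I1 = f \<and> \<omega> I2 = g"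
  by (simp add: fun_eq_iff[of \<omega>] all_idx_iff lmult1_def e_def)

lemma torsion_free_iff:
  "torsion_free \<Theta> A \<longleftrightarrow> de \<Theta> I1 + 2 * A G10 I2 = 0 \<and> de \<Theta> I2 - 2 * A G01 I1 = 0"
proof -
  have "de \<Theta> I1 + (\<Sum>i\<in>{G10, G01}. wedge (A i) (act i I1)) = de \<Theta> I1 + 2 * A G10 I2"
    and "de \<Theta> I2 + (\<Sum>i\<in>{G10, G01}. wedge (A i) (act i I2)) = de \<Theta> I2 - 2 * A G01 I1"
    by (simp_all add: wedge_expand act_def gdir_def lmult1_def e_def R_def fun_eq_iff)
  then show ?thesis
    by (simp add: torsion_free_def all_idx_iff)
qed

lemma cotorsion_free_iff:
  "cotorsion_free \<Theta> A \<longleftrightarrow>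
     de \<Theta> I1 - 2 * R I1 (A G10 I2) = 0 \<and> de \<Theta> I2 + 2 * R I2 (A G01 I1) = 0"
proof -
  have "de \<Theta> I1 + (\<Sum>i\<in>{G10, G01}. wedge (act i I1) (A i)) = de \<Theta> I1 - 2 * R I1 (A G10 I2)"
    and "de \<Theta> I2 + (\<Sum>i\<in>{G10, G01}. wedge (act i I2) (A i)) = de \<Theta> I2 + 2 * R I2 (A G01 I1)"
    by (simp_all add: wedge_expand act_def gdir_def lmult1_def e_def fun_eq_iff)
  then show ?thesis
    by (simp add: cotorsion_free_def all_idx_iff)
qed

lemma cotorsion_free_iff_torsion_free: "cotorsion_free \<Theta> A \<longleftrightarrow> torsion_free \<Theta> A"
proof -
  have reflect1: "R I1 (de \<Theta> I1 - 2 * R I1 (A G10 I2)) = - (de \<Theta> I1 + 2 * A G10 I2)"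
    and reflect2: "R I2 (de \<Theta> I2 + 2 * R I2 (A G01 I1)) = - (de \<Theta> I2 - 2 * A G01 I1)"
    by (simp_all add: R_add R_diff R_mult R_numeral R_de)
  have "de \<Theta> I1 - 2 * R I1 (A G10 I2) = 0 \<longleftrightarrow> de \<Theta> I1 + 2 * A G10 I2 = 0"
    by (subst R_eq_zero_iff[of I1, symmetric]) (simp only: reflect1 neg_equal_0_iff_equal)
  moreover have "de \<Theta> I2 + 2 * R I2 (A G01 I1) = 0 \<longleftrightarrow> de \<Theta> I2 - 2 * A G01 I1 = 0"
    by (subst R_eq_zero_iff[of I2, symmetric]) (simp only: reflect2 neg_equal_0_iff_equal)
  ultimately show ?thesis
    by (simp add: cotorsion_free_iff torsion_free_iff)
qed

lemma torsion_free_iff_offdiagonal: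
  "torsion_free \<Theta> A \<longleftrightarrow>
     A G10 I2 = (\<lambda>x. - dbar I1 (\<Theta> I2) x / 2) \<and> A G01 I1 = (\<lambda>x. - dbar I2 (\<Theta> I1) x / 2)"
proof -
  have half: "d + 2 * y = 0 \<longleftrightarrow> y = (\<lambda>x. - d x / 2)" for d y :: fn
    unfolding fun_eq_iff by (intro all_cong1) auto
  have neg: "- d - 2 * y = - (d + 2 * y)" for d y :: fn
    by simp
  show ?thesis
    by (simp only: torsion_free_iff de_def idx.case neg neg_equal_0_iff_equal half)
qed

lemma tens_add_left: "tens (\<omega> + \<omega>') \<eta> = tens \<omega> \<eta> + tens \<omega>' \<eta>"
  by (simp add: tens_def fun_eq_iff algebra_simps)

lemma tens_lmult1_left: "tens (lmult1 f \<omega>) \<eta> = lmult f (tens \<omega> \<eta>)"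
  by (simp add: tens_def lmult1_def lmult_def fun_eq_iff)

lemma lmult_add: "lmult f (S + T) = lmult f S + lmult f T"
  by (simp add: lmult_def fun_eq_iff algebra_simps)

lemma lmult_lmult: "lmult f (lmult g T) = lmult (f * g) T"
  by (simp add: lmult_def fun_eq_iff)

lemma nabla_e_gdir: "nabla \<Theta> A (e (gdir i)) = lmult 2 (tens (A i) (e (gdir i)))"
  by (cases i) (auto simp: fun_eq_iff nabla_def tens_def dfun_def dbar_def e_def act_def
      gdir_def lmult_def lmult1_def R_def)

lemma regular_iff_of_odd_offdiagonal:
  assumes "R I1 g = - g" and "R I2 f = - f"
    and "A G10 = lmult1 a (e I1) + lmult1 g (e I2)"
    and "A G01 = lmult1 f (e I1) + lmult1 b (e I2)"
  shows "regular A \<longleftrightarrow> a * R I1 b - b * R I2 a = 0"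
proof -
  have "A G10 I1 = a" "A G10 I2 = g" "A G01 I1 = f" "A G01 I2 = b"
    using assms(3,4) by (simp_all add: oneform_eq_iff)
  then have "wedge (A G10) (A G01) + wedge (A G01) (A G10) = a * R I1 b - b * R I2 a"
    by (simp add: wedge_expand assms(1,2) algebra_simps)
  then show ?thesis
    by (simp add: regular_def)
qed

lemma mult_dbar_diff_eq: "f * dbar a g - g * dbar c f = f * R a g - g * R c f"
  by (simp add: dbar_def algebra_simps)

theorem proposition4p11:
  fixes \<Theta> :: "idx \<Rightarrow> fn"
  assumes "zweibein \<Theta>"
  defines "s1 \<equiv> dbar I2 (\<Theta> I1)" and "s2 \<equiv> dbar I1 (\<Theta> I2)"
  shows "(\<forall>A. torsion_free \<Theta> A \<and> cotorsion_free \<Theta> A \<longleftrightarrow>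
            (\<exists>a b. A G10 = lmult1 a (e I1) + lmult1 (\<lambda>x. - s2 x / 2) (e I2) \<and>
                   A G01 = lmult1 (\<lambda>x. - s1 x / 2) (e I1) + lmult1 b (e I2)))
       \<and> (\<forall>a b A. A G10 = lmult1 a (e I1) + lmult1 (\<lambda>x. - s2 x / 2) (e I2) \<and>
                  A G01 = lmult1 (\<lambda>x. - s1 x / 2) (e I1) + lmult1 b (e I2) \<longrightarrow>
             nabla \<Theta> A (e I1) = lmult (2 * a) (tens (e I1) (e I1)) + lmult (- s2) (tens (e I2) (e I1))
           \<and> nabla \<Theta> A (e I2) = lmult (- s1) (tens (e I1) (e I2)) + lmult (2 * b) (tens (e I2) (e I2))
           \<and> (regular A \<longleftrightarrow> a * dbar I1 b - b * dbar I2 a = 0)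
           \<and> (regular A \<longleftrightarrow> a * R I1 b - b * R I2 a = 0))"
proof -
  have offdiagonal_odd: "R I1 (\<lambda>x. - s2 x / 2) = - (\<lambda>x. - s2 x / 2)" "R I2 (\<lambda>x. - s1 x / 2) = - (\<lambda>x. - s1 x / 2)"
    using R_dbar[of I1 "\<Theta> I2"] R_dbar[of I2 "\<Theta> I1"]
    by (simp_all add: s1_def s2_def R_def fun_eq_iff)
  have halves: "2 * (\<lambda>x. - s x / 2) = - s" for s :: fn
    by (simp add: fun_eq_iff)
  show ?thesis
  proof (intro conjI allI impI)
    show "torsion_free \<Theta> A \<and> cotorsion_free \<Theta> A \<longleftrightarrow>
            (\<exists>a b. A G10 = lmult1 a (e I1) + lmult1 (\<lambda>x. - s2 x / 2) (e I2) \<and>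
                   A G01 = lmult1 (\<lambda>x. - s1 x / 2) (e I1) + lmult1 b (e I2))" for A
      by (simp add: cotorsion_free_iff_torsion_free torsion_free_iff_offdiagonal oneform_eq_iff
          s1_def s2_def)
  next
    fix a b A
    assume "A G10 = lmult1 a (e I1) + lmult1 (\<lambda>x. - s2 x / 2) (e I2) \<and>
            A G01 = lmult1 (\<lambda>x. - s1 x / 2) (e I1) + lmult1 b (e I2)"
    then have A10: "A G10 = lmult1 a (e I1) + lmult1 (\<lambda>x. - s2 x / 2) (e I2)"
      and A01: "A G01 = lmult1 (\<lambda>x. - s1 x / 2) (e I1) + lmult1 b (e I2)"
      by blast+
    show "nabla \<Theta> A (e I1) = lmult (2 * a) (tens (e I1) (e I1)) + lmult (- s2) (tens (e I2) (e I1))"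
      using nabla_e_gdir[of \<Theta> A G10]
      by (simp only: A10 gdir_def gen.case tens_add_left tens_lmult1_left lmult_add lmult_lmult halves)
    show "nabla \<Theta> A (e I2) = lmult (- s1) (tens (e I1) (e I2)) + lmult (2 * b) (tens (e I2) (e I2))"
      using nabla_e_gdir[of \<Theta> A G01]
      by (simp only: A01 gdir_def gen.case tens_add_left tens_lmult1_left lmult_add lmult_lmult halves)
    show "regular A \<longleftrightarrow> a * R I1 b - b * R I2 a = 0"
      using offdiagonal_odd A10 A01 by (rule regular_iff_of_odd_offdiagonal)
    then show "regular A \<longleftrightarrow> a * dbar I1 b - b * dbar I2 a = 0"
      by (simp add: mult_dbar_diff_eq)
  qed
qed

end
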